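(* Let $n\geq 4$. The wheel $W_n$ is not strong cop-win (i.e. not strong $1$-cop-win), but it is strong 2-cop-win, and $\lim_{m\to\infty}\mathrm{capt}_2(W_n,m)=n-3$.
   Context: The wheel $W_n$ ($n\geq 4$) is the cycle $C_{n-1}$ together with one additional vertex adjacent to all cycle vertices. All graphs are reflexive (a player may stay in place). The game of $k$ cops and $m$ robbers on $G$: in round 0 the cops first choose starting vertices, then the robbers choose theirs. In each round $i\geq 1$, all $k$ cops move (each to an adjacent vertex or staying), then all $m$ robbers move likewise. Several players may occupy the same vertex. Whenever a cop and some robbers occupy the same vertex, those robbers are captured and take no further part in the game. Both sides have full information. The cops win if all robbers are captured after finitely many rounds. $G$ is $k$-cop-win if $k$ cops can always win against one robber. For a $k$-cop-win graph $G$, $\mathrm{capt}_k(G,m)$ is the index of the round in which the last robber is captured when $k$ cops play to minimize this index and $m$ robbers play to maximize it. $G$ is strong $k$-cop-win if $\lim_{m\to\infty}\mathrm{capt}_k(G,m)$ exists (and is finite). *)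

theory Defs
  imports Complex_Main
begin

(* A graph is given by a vertex set V and an (irreflexive, symmetric) edge relation E
   whose edges lie inside V.  Graphs are reflexive for the game: a player may stay. *)

definition step :: "('v \<Rightarrow> 'v \<Rightarrow> bool) \<Rightarrow> 'v \<Rightarrow> 'v \<Rightarrow> bool" where
  "step E u w \<longleftrightarrow> u = w \<or> E u w"

definition alive :: "'v list \<Rightarrow> 'v list \<Rightarrow> 'v list" where
  "alive C R = filter (\<lambda>r. r \<notin> set C) R"

(* cops_force E t C R: from a position at the end of a round, with cops at C and
   uncaptured robbers at R, the cops can force that all robbers are captured within
   the next t rounds, whatever the robbers do. *)
fun cops_force :: "('v \<Rightarrow> 'v \<Rightarrow> bool) \<Rightarrow> nat \<Rightarrow> 'v list \<Rightarrow> 'v list \<Rightarrow> bool" where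
  "cops_force E 0 C R \<longleftrightarrow> R = []"
| "cops_force E (Suc t) C R \<longleftrightarrow> R = [] \<or>
     (\<exists>C'. list_all2 (step E) C C' \<and>
        (\<forall>R'. list_all2 (step E) (alive C' R) R' \<longrightarrow> cops_force E t C' (alive C' R')))"

(* k cops can guarantee that all m robbers are captured by round t (round 0 = placement) *)
definition capt_within :: "'v set \<Rightarrow> ('v \<Rightarrow> 'v \<Rightarrow> bool) \<Rightarrow> nat \<Rightarrow> nat \<Rightarrow> nat \<Rightarrow> bool" where
  "capt_within V E k m t \<longleftrightarrow>
     (\<exists>C. length C = k \<and> set C \<subseteq> V \<and>
        (\<forall>R. length R = m \<and> set R \<subseteq> V \<longrightarrow> cops_force E t C (alive C R)))"

definition cop_win :: "'v set \<Rightarrow> ('v \<Rightarrow> 'v \<Rightarrow> bool) \<Rightarrow> nat \<Rightarrow> bool" where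
  "cop_win V E k \<longleftrightarrow> (\<exists>t. capt_within V E k 1 t)"

definition capt :: "'v set \<Rightarrow> ('v \<Rightarrow> 'v \<Rightarrow> bool) \<Rightarrow> nat \<Rightarrow> nat \<Rightarrow> nat" where
  "capt V E k m = (LEAST t. capt_within V E k m t)"

definition strong_cop_win :: "'v set \<Rightarrow> ('v \<Rightarrow> 'v \<Rightarrow> bool) \<Rightarrow> nat \<Rightarrow> bool" where
  "strong_cop_win V E k \<longleftrightarrow> cop_win V E k \<and> (\<exists>L. (\<lambda>m. real (capt V E k m)) \<longlonglongrightarrow> L)"

(* Wheel W_n: hub 0, cycle 1,2,...,n-1,1 *)
definition wheel_V :: "nat \<Rightarrow> nat set" where
  "wheel_V n = {0..<n}"

definition wheel_E :: "nat \<Rightarrow> nat \<Rightarrow> nat \<Rightarrow> bool" where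
  "wheel_E n u w \<longleftrightarrow> u \<noteq> w \<and>
     ((u = 0 \<and> w \<in> {1..<n}) \<or> (w = 0 \<and> u \<in> {1..<n}) \<or>
      (u \<in> {1..<n} \<and> w \<in> {1..<n} \<and> (w = u mod (n - 1) + 1 \<or> u = w mod (n - 1) + 1)))"

end

theory Submission
  imports Defs
begin

(* Call the set of vertices that may still hold a robber the robbers' territory. If there is
   a robber for every start vertex and every plan of moves (|V|^(t+1) robbers suffice for
   t rounds), the cops capture everyone within t rounds only if they can clear the whole
   territory within t rounds; conversely, clearing the territory captures any number of robbers.

   A single cop on W_n never clears more than its own vertex, since every other vertex is
   reached through the hub or along the rim. So capt_1(W_n, m) grows without bound, although
   it is finite: a cop on the hub catches at least one robber every two rounds.

   With two cops the cleared set starts with at most two vertices and grows by at most one per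
   round: a cleared vertex stays cleared only if it carries a cop or all its neighbours are
   cleared, and if both cops step onto new vertices, some old cleared vertex has an uncleared
   neighbour (the hub, or a rim neighbour). Hence two cops need n - 3 rounds against many
   robbers, and n - 3 rounds suffice: one cop walks down the rim while the other alternates
   between the hub and rim vertex 2, squeezing the robbers into a shrinking arc. *)

section \<open>The game against the robbers' territory\<close>

lemma list_all2_set_rightD: "list_all2 P xs ys \<Longrightarrow> y \<in> set ys \<Longrightarrow> \<exists>x\<in>set xs. P x y"
  by (metis in_set_conv_nth list_all2_conv_all_nth)

lemma alive_map_fst: "alive C (map fst P) = map fst (filter (\<lambda>p. fst p \<notin> set C) P)"
  by (simp add: alive_def filter_map o_def)

lemma robbers_after_move:
  assumes moves: "list_all2 (step E) (alive C R) R'" and "set R \<subseteq> V"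
    and closed: "\<And>x w. x \<in> V \<Longrightarrow> step E x w \<Longrightarrow> w \<in> V"
  shows "set (alive C R') \<subseteq> V - set C" and "length (alive C R') \<le> length (alive C R)"
proof -
  have "set R' \<subseteq> V"
    using list_all2_set_rightD[OF moves] \<open>set R \<subseteq> V\<close> closed by (fastforce simp: alive_def)
  then show "set (alive C R') \<subseteq> V - set C"
    by (auto simp: alive_def)
  have "length (alive C R') \<le> length R'"
    by (simp add: alive_def)
  then show "length (alive C R') \<le> length (alive C R)"
    using list_all2_lengthD[OF moves] by simp
qed

lemma cops_force_universal_vertex:
  assumes closed: "\<And>x w. x \<in> V \<Longrightarrow> step E x w \<Longrightarrow> w \<in> V"
    and universal: "\<And>v. v \<in> V \<Longrightarrow> step E h v \<and> step E v h"
  shows "set R \<subseteq> V - {h} \<Longrightarrow> length R \<le> k \<Longrightarrow> cops_force E (2 * k) [h] R"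
proof (induction k arbitrary: R)
  case (Suc k)
  have via_hub: "cops_force E (Suc (2 * k)) [r] Q" if "r \<in> V" "set Q \<subseteq> V" "length Q \<le> k" for r Q
  proof -
    have "cops_force E (2 * k) [h] (alive [h] R')" if "list_all2 (step E) (alive [h] Q) R'" for R'
    proof (rule Suc.IH)
      show "set (alive [h] R') \<subseteq> V - {h}"
        using robbers_after_move(1)[OF that \<open>set Q \<subseteq> V\<close>] closed by fastforce
      have "length (alive [h] Q) \<le> length Q"
        by (simp add: alive_def)
      then show "length (alive [h] R') \<le> k"
        using robbers_after_move(2)[OF that \<open>set Q \<subseteq> V\<close>] closed \<open>length Q \<le> k\<close> by fastforce
    qed
    then show ?thesis
      unfolding cops_force.simps(2) using universal \<open>r \<in> V\<close>
      by (intro disjI2 exI[of _ "[h]"]) auto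
  qed
  show ?case
  proof (cases R)
    case (Cons r rs)
    have "set R \<subseteq> V" "r \<in> V"
      using Suc.prems(1) Cons by auto
    have "length (alive [r] R) < length R"
      unfolding alive_def using Cons by (intro length_filter_less) auto
    then have "cops_force E (Suc (2 * k)) [r] (alive [r] R')"
      if "list_all2 (step E) (alive [r] R) R'" for R'
      using robbers_after_move[OF that \<open>set R \<subseteq> V\<close>] closed Suc.prems(2) \<open>r \<in> V\<close>
      by (intro via_hub) fastforce+
    moreover have "step E h r"
      using universal \<open>r \<in> V\<close> by blast
    ultimately show ?thesis
      unfolding mult_Suc_right add_2_eq_Suc cops_force.simps(2)
      by (intro disjI2 exI[of _ "[r]"]) auto
  qed simp
qed simp

definition territory_after :: "('v \<Rightarrow> 'v \<Rightarrow> bool) \<Rightarrow> 'v list \<Rightarrow> 'v set \<Rightarrow> 'v set" where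
  "territory_after E C' S = {w. \<exists>x\<in>S - set C'. step E x w} - set C'"

fun cops_sweep :: "('v \<Rightarrow> 'v \<Rightarrow> bool) \<Rightarrow> nat \<Rightarrow> 'v list \<Rightarrow> 'v set \<Rightarrow> bool" where
  "cops_sweep E 0 C S \<longleftrightarrow> S = {}"
| "cops_sweep E (Suc t) C S \<longleftrightarrow> S = {} \<or>
     (\<exists>C'. list_all2 (step E) C C' \<and> cops_sweep E t C' (territory_after E C' S))"

lemma cops_sweep_empty [simp]: "cops_sweep E t C {}"
  by (cases t) auto

lemma territory_after_mono: "S \<subseteq> S' \<Longrightarrow> territory_after E C' S \<subseteq> territory_after E C' S'"
  unfolding territory_after_def by blast

lemma territory_after_subset:
  "(\<And>x w. x \<in> V \<Longrightarrow> step E x w \<Longrightarrow> w \<in> V) \<Longrightarrow> S \<subseteq> V \<Longrightarrow> territory_after E C' S \<subseteq> V"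
  unfolding territory_after_def by blast

lemma territory_after_eq_empty: "S \<subseteq> set C' \<Longrightarrow> territory_after E C' S = {}"
  unfolding territory_after_def by blast

lemma cleared_after_subset: "V - territory_after E C' (V - K) \<subseteq> K \<union> set C'"
  unfolding territory_after_def step_def by blast

lemma cops_sweep_antimono: "cops_sweep E t C S' \<Longrightarrow> S \<subseteq> S' \<Longrightarrow> cops_sweep E t C S"
proof (induction t arbitrary: C S S')
  case (Suc t)
  show ?case
  proof (cases "S' = {}")
    case False
    with Suc.prems obtain C' where "list_all2 (step E) C C'"
      and "cops_sweep E t C' (territory_after E C' S')"
      by auto
    with Suc.IH Suc.prems(2) show ?thesis
      by (meson cops_sweep.simps(2) territory_after_mono)
  qed (use Suc.prems in simp)
qed simp

lemma cops_force_if_cops_sweep: "cops_sweep E t C S \<Longrightarrow> set R \<subseteq> S \<Longrightarrow> cops_force E t C R"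
proof (induction t arbitrary: C S R)
  case (Suc t)
  show ?case
  proof (cases "S = {}")
    case False
    with Suc.prems obtain C' where moves: "list_all2 (step E) C C'"
      and sweep: "cops_sweep E t C' (territory_after E C' S)"
      by auto
    have "cops_force E t C' (alive C' R')" if "list_all2 (step E) (alive C' R) R'" for R'
    proof (rule Suc.IH[OF sweep])
      show "set (alive C' R') \<subseteq> territory_after E C' S"
        using list_all2_set_rightD[OF that] Suc.prems(2)
        by (fastforce simp: alive_def territory_after_def)
    qed
    with moves show ?thesis
      by auto
  qed (use Suc.prems in simp)
qed simp

text \<open>A robber \<open>(v, s)\<close> starts on \<open>v\<close> and in round \<open>i\<close> moves to the \<open>i\<close>-th entry of its plan \<open>s\<close>
  if that is a legal move (and stays otherwise).\<close>

lemma cops_sweep_if_cops_force_all_plans: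
  assumes closed: "\<And>x w. x \<in> V \<Longrightarrow> step E x w \<Longrightarrow> w \<in> V"
  shows "cops_force E t C (map fst P) \<Longrightarrow> S \<subseteq> V
    \<Longrightarrow> (\<And>v s. v \<in> S \<Longrightarrow> set s \<subseteq> V \<Longrightarrow> length s = t \<Longrightarrow> (v, s) \<in> set P)
    \<Longrightarrow> cops_sweep E t C S"
proof (induction t arbitrary: C S P)
  case 0
  then have "P = []"
    by simp
  with "0.prems"(3)[of _ "[]"] show ?case
    by auto
next
  case (Suc t)
  show ?case
  proof (cases "S = {}")
    case False
    then obtain v where "v \<in> S" "v \<in> V"
      using Suc.prems(2) by blast
    then have "(v, replicate (Suc t) v) \<in> set P"
      by (intro Suc.prems(3)) auto
    with Suc.prems(1) obtain C' where moves: "list_all2 (step E) C C'"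
      and force: "\<And>R'. list_all2 (step E) (alive C' (map fst P)) R' \<Longrightarrow>
                   cops_force E t C' (alive C' R')"
      by (cases P) auto
    define advance where "advance p = (if snd p \<noteq> [] \<and> step E (fst p) (hd (snd p))
      then hd (snd p) else fst p, tl (snd p))" for p
    define P' where "P' = map advance (filter (\<lambda>p. fst p \<notin> set C') P)"
    have "list_all2 (step E) (alive C' (map fst P)) (map fst P')"
      unfolding alive_map_fst P'_def list.rel_map
      by (rule list_all2_refl) (auto simp: advance_def step_def)
    then have "cops_force E t C' (alive C' (map fst P'))"
      by (rule force)
    then have "cops_force E t C' (map fst (filter (\<lambda>p. fst p \<notin> set C') P'))"
      by (simp only: alive_map_fst)
    then have "cops_sweep E t C' (territory_after E C' S)"
    proof (rule Suc.IH)
      show "territory_after E C' S \<subseteq> V"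
        by (rule territory_after_subset[OF closed Suc.prems(2)])
      fix u s assume u: "u \<in> territory_after E C' S" and s: "set s \<subseteq> V" "length s = t"
      then obtain x where x: "x \<in> S" "x \<notin> set C'" "step E x u" "u \<notin> set C'"
        unfolding territory_after_def by blast
      with Suc.prems(2) closed have "u \<in> V"
        by blast
      with x s have "(x, u # s) \<in> set (filter (\<lambda>p. fst p \<notin> set C') P)"
        using Suc.prems(3)[of x "u # s"] by simp
      moreover have "advance (x, u # s) = (u, s)"
        using x by (simp add: advance_def)
      ultimately have "(u, s) \<in> set P'"
        unfolding P'_def set_map by (metis image_eqI)
      with x show "(u, s) \<in> set (filter (\<lambda>p. fst p \<notin> set C') P')"
        by simp
    qed
    with moves show ?thesis
      by auto
  qed simp
qed

lemma not_capt_within_if_not_cops_sweep: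
  assumes "finite V" and closed: "\<And>x w. x \<in> V \<Longrightarrow> step E x w \<Longrightarrow> w \<in> V"
    and many: "card V ^ Suc t \<le> m"
    and no_sweep: "\<And>C. length C = k \<Longrightarrow> set C \<subseteq> V \<Longrightarrow> \<not> cops_sweep E t C (V - set C)"
  shows "\<not> capt_within V E k m t"
proof
  assume "capt_within V E k m t"
  then obtain C where C: "length C = k" "set C \<subseteq> V"
    and force: "\<And>R. length R = m \<Longrightarrow> set R \<subseteq> V \<Longrightarrow> cops_force E t C (alive C R)"
    unfolding capt_within_def by blast
  define plans where "plans = V \<times> {s. set s \<subseteq> V \<and> length s = t}"
  have "finite plans"
    unfolding plans_def using \<open>finite V\<close> by (simp add: finite_lists_length_eq)
  then obtain xs where xs: "set xs = plans" "distinct xs"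
    using finite_distinct_list by blast
  have length_xs: "length xs = card V ^ Suc t"
    using xs \<open>finite V\<close> distinct_card[of xs]
    by (simp add: plans_def card_cartesian_product card_lists_length_eq)
  have "\<not> cops_sweep E t C (V - set C)"
    by (rule no_sweep[OF C])
  then obtain v where "v \<in> V"
    by fastforce
  then have "(v, replicate t v) \<in> plans"
    by (simp add: plans_def set_replicate_conv_if)
  define P where "P = xs @ replicate (m - length xs) (v, replicate t v)"
  have "length P = m"
    using many length_xs by (simp add: P_def)
  moreover have "set P = plans"
    using xs \<open>(v, replicate t v) \<in> plans\<close> by (auto simp: P_def)
  ultimately have captured: "cops_force E t C (map fst (filter (\<lambda>p. fst p \<notin> set C) P))"
    using force[of "map fst P"] by (auto simp: plans_def alive_map_fst)
  have "cops_sweep E t C (V - set C)"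
    by (rule cops_sweep_if_cops_force_all_plans[OF _ captured])
      (use closed \<open>set P = plans\<close> in \<open>auto simp: plans_def\<close>)
  with \<open>\<not> cops_sweep E t C (V - set C)\<close> show False ..
qed

lemma capt_eqI:
  "capt_within V E k m t \<Longrightarrow> (\<And>t'. t' < t \<Longrightarrow> \<not> capt_within V E k m t') \<Longrightarrow> capt V E k m = t"
  unfolding capt_def by (rule Least_equality) (auto simp: not_less[symmetric])

lemma less_capt:
  "capt_within V E k m t \<Longrightarrow> (\<And>t'. t' \<le> T \<Longrightarrow> \<not> capt_within V E k m t') \<Longrightarrow> T < capt V E k m"
  unfolding capt_def by (metis LeastI not_less)

lemma not_convergent_if_unbounded:
  fixes f :: "nat \<Rightarrow> nat"
  assumes "\<And>T. \<exists>m. T < f m"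
  shows "\<not> (\<exists>L. (\<lambda>m. real (f m)) \<longlonglongrightarrow> L)"
proof
  assume "\<exists>L. (\<lambda>m. real (f m)) \<longlonglongrightarrow> L"
  then have "Bseq (\<lambda>m. real (f m))"
    using convergent_imp_Bseq convergentI by blast
  then obtain B where B: "\<forall>m. norm (real (f m)) \<le> B"
    unfolding Bseq_def by blast
  obtain m where "nat \<lceil>B\<rceil> < f m"
    using assms by blast
  with B show False
    by (metis norm_of_nat of_nat_less_iff less_le_trans not_less real_nat_ceiling_ge)
qed

section \<open>Moves on the wheel\<close>

lemma wheel_step_closed: "step (wheel_E n) u w \<Longrightarrow> u < n \<Longrightarrow> w < n"
  unfolding step_def wheel_E_def by auto

lemma wheel_step_hub: "v < n \<Longrightarrow> step (wheel_E n) 0 v \<and> step (wheel_E n) v 0"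
  unfolding step_def wheel_E_def by auto

lemma wheel_step_rim_next:
  "1 \<le> v \<Longrightarrow> v + 2 \<le> n \<Longrightarrow> step (wheel_E n) v (v + 1) \<and> step (wheel_E n) (v + 1) v"
  unfolding step_def wheel_E_def by auto

lemma wheel_step_interior:
  assumes "step (wheel_E n) x w" "2 \<le> x" "x + 2 \<le> n"
  shows "w = 0 \<or> w + 1 = x \<or> w = x \<or> w = x + 1"
proof -
  have "w mod (n - 1) + 1 = x \<Longrightarrow> w < n \<Longrightarrow> w + 1 = x"
    using assms(2,3) by (cases "w = n - 1") auto
  then show ?thesis
    using assms unfolding step_def wheel_E_def by auto
qed

definition rim_succ :: "nat \<Rightarrow> nat \<Rightarrow> nat" where
  "rim_succ n v = v mod (n - 1) + 1"

definition rim_pred :: "nat \<Rightarrow> nat \<Rightarrow> nat" where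
  "rim_pred n v = (if v = 1 then n - 1 else v - 1)"

lemma rim_succ_pred: "v \<in> {1..<n} \<Longrightarrow> rim_succ n (rim_pred n v) = v"
  unfolding rim_succ_def rim_pred_def by auto

lemma rim_succ_adjacent:
  assumes "n \<ge> 4" "v \<in> {1..<n}"
  shows "rim_succ n v \<in> {1..<n} - {v}" and "step (wheel_E n) (rim_succ n v) v"
proof -
  have "rim_succ n v = (if v = n - 1 then 1 else v + 1)"
    using assms unfolding rim_succ_def by auto
  then show "rim_succ n v \<in> {1..<n} - {v}" "step (wheel_E n) (rim_succ n v) v"
    using assms unfolding step_def wheel_E_def rim_succ_def by auto
qed

lemma rim_pred_adjacent:
  assumes "n \<ge> 4" "v \<in> {1..<n}"
  shows "rim_pred n v \<in> {1..<n} - {v}" and "step (wheel_E n) (rim_pred n v) v"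
proof -
  show "rim_pred n v \<in> {1..<n} - {v}"
    using assms unfolding rim_pred_def by auto
  then show "step (wheel_E n) (rim_pred n v) v"
    using assms rim_succ_pred[OF assms(2)] unfolding step_def wheel_E_def rim_succ_def by auto
qed

lemma rim_eq_if_pred_closed:
  assumes "A \<subseteq> {1..<n}" "a \<in> A" and closed: "\<And>x. x \<in> A \<Longrightarrow> rim_pred n x \<in> A"
  shows "A = {1..<n}"
proof -
  have down: "u \<in> A" if "b \<in> A" "1 \<le> u" "u \<le> b" for b u
    using \<open>u \<le> b\<close> \<open>b \<in> A\<close>
  proof (induction rule: inc_induct)
    case (step m)
    with \<open>1 \<le> u\<close> closed[of "Suc m"] show ?case
      by (simp add: rim_pred_def)
  qed
  have "1 \<in> A"
    using down[OF \<open>a \<in> A\<close>] assms(1,2) by force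
  then have "n - 1 \<in> A"
    using closed[of 1] by (simp add: rim_pred_def)
  then show ?thesis
    using assms(1) down[of "n - 1"] by force
qed

lemma rim_eq_if_succ_closed:
  assumes "A \<subseteq> {1..<n}" "a \<in> A" and closed: "\<And>x. x \<in> A \<Longrightarrow> rim_succ n x \<in> A"
  shows "A = {1..<n}"
proof -
  have up: "u \<in> A" if "b \<in> A" "b \<le> u" "u < n" for b u
    using \<open>b \<le> u\<close> \<open>b \<in> A\<close>
  proof (induction rule: dec_induct)
    case (step m)
    with \<open>u < n\<close> closed[of m] show ?case
      by (simp add: rim_succ_def)
  qed
  have "n - 1 \<in> A"
    using up[OF \<open>a \<in> A\<close>] assms(1,2) by force
  then have "1 \<in> A"
    using closed[of "n - 1"] by (simp add: rim_succ_def)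
  then show ?thesis
    using assms(1) up[of 1] by force
qed

lemma rim_exposed_vertex:
  assumes "K \<subseteq> {1..<n}" "K \<noteq> {}" "c \<in> {1..<n} - K" "insert c K \<noteq> {1..<n}"
  shows "\<exists>x\<in>K. rim_pred n x \<notin> insert c K \<or> rim_succ n x \<notin> insert c K"
proof -
  obtain a where a: "a \<in> insert c K" "rim_pred n a \<notin> insert c K"
    using rim_eq_if_pred_closed[of "insert c K" n c] assms(1,3,4) by blast
  obtain e where e: "e \<in> insert c K" "rim_succ n e \<notin> insert c K"
    using rim_eq_if_succ_closed[of "insert c K" n c] assms(1,3,4) by blast
  show ?thesis
  proof (cases "a = c \<and> e = c")
    case True
    obtain x where x: "x \<in> K" "rim_pred n x \<notin> K"
      using rim_eq_if_pred_closed[of K n] assms by blast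
    have "rim_pred n x \<noteq> c"
      using rim_succ_pred[of x n] x(1) assms(1) e True by auto
    with x show ?thesis
      by blast
  qed (use a e in blast)
qed

section \<open>One cop\<close>

lemma wheel_territory_one_cop:
  assumes "n \<ge> 4" "c < n" "c' < n"
  shows "{0..<n} - {c'} \<subseteq> territory_after (wheel_E n) [c'] ({0..<n} - {c})"
proof
  fix v assume v: "v \<in> {0..<n} - {c'}"
  have "\<exists>x\<in>{0..<n} - {c} - {c'}. step (wheel_E n) x v"
  proof (cases "v = c")
    case False
    with v show ?thesis
      by (auto simp: step_def)
  next
    case True
    consider "c = 0" | "c \<noteq> 0" "c' \<noteq> 0" | "c \<noteq> 0" "c' = 0"
      by blast
    then show ?thesis
    proof cases
      case 1
      define x where "x = (if c' = 1 then 2 else 1 :: nat)"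
      have "x \<in> {0..<n} - {c} - {c'}"
        using assms 1 by (auto simp: x_def)
      with wheel_step_hub[of x n] show ?thesis
        using True 1 by auto
    next
      case 2
      with wheel_step_hub[of v n] v True show ?thesis
        by auto
    next
      case 3
      with rim_succ_adjacent[of n c] assms True show ?thesis
        by (intro bexI[of _ "rim_succ n c"]) auto
    qed
  qed
  with v show "v \<in> territory_after (wheel_E n) [c'] ({0..<n} - {c})"
    unfolding territory_after_def by auto
qed

lemma wheel_one_cop_no_sweep:
  assumes "n \<ge> 4"
  shows "c < n \<Longrightarrow> \<not> cops_sweep (wheel_E n) t [c] ({0..<n} - {c})"
proof (induction t arbitrary: c)
  case 0
  then have "(if c = 0 then 1 else 0) \<in> {0..<n} - {c}"
    using assms by auto
  then show ?case
    by auto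
next
  case (Suc t)
  have "\<not> cops_sweep (wheel_E n) t C' (territory_after (wheel_E n) C' ({0..<n} - {c}))"
    if moves: "list_all2 (step (wheel_E n)) [c] C'" for C'
  proof -
    obtain c' where "C' = [c']" "step (wheel_E n) c c'"
      using moves by (cases C') auto
    with Suc.prems have "c' < n" "C' = [c']"
      using wheel_step_closed by auto
    with Suc.IH[of c'] show ?thesis
      using cops_sweep_antimono wheel_territory_one_cop[OF assms Suc.prems] by blast
  qed
  moreover have "(if c = 0 then 1 else 0) \<in> {0..<n} - {c}"
    using assms by auto
  ultimately show ?case
    unfolding cops_sweep.simps(2) by blast
qed

lemma wheel_capt_within_one:
  assumes "n \<ge> 4"
  shows "capt_within (wheel_V n) (wheel_E n) 1 m (2 * m)"
  unfolding capt_within_def wheel_V_def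
proof (intro exI[of _ "[0]"] conjI allI impI)
  fix R assume R: "length R = m \<and> set R \<subseteq> {0..<n}"
  show "cops_force (wheel_E n) (2 * m) [0] (alive [0] R)"
  proof (rule cops_force_universal_vertex[where V = "{0..<n}"])
    show "set (alive [0] R) \<subseteq> {0..<n} - {0}" "length (alive [0] R) \<le> m"
      using R by (auto simp: alive_def)
  qed (use wheel_step_closed wheel_step_hub in auto)
qed (use assms in auto)

lemma wheel_not_capt_within_one:
  assumes "n \<ge> 4" "n ^ Suc t \<le> m"
  shows "\<not> capt_within (wheel_V n) (wheel_E n) 1 m t"
  unfolding wheel_V_def
proof (rule not_capt_within_if_not_cops_sweep)
  fix C :: "nat list" assume "length C = 1" "set C \<subseteq> {0..<n}"
  then obtain c where "C = [c]" "c < n"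
    by (auto simp: length_Suc_conv)
  then show "\<not> cops_sweep (wheel_E n) t C ({0..<n} - set C)"
    using wheel_one_cop_no_sweep[OF assms(1)] by simp
qed (use assms wheel_step_closed in auto)

lemma wheel_capt_one_unbounded:
  assumes "n \<ge> 4"
  shows "T < capt (wheel_V n) (wheel_E n) 1 (n ^ Suc T)"
proof (rule less_capt[OF wheel_capt_within_one[OF assms]])
  fix t assume "t \<le> T"
  then have "n ^ Suc t \<le> n ^ Suc T"
    using assms by (simp add: power_increasing)
  with assms show "\<not> capt_within (wheel_V n) (wheel_E n) 1 (n ^ Suc T) t"
    by (rule wheel_not_capt_within_one)
qed

section \<open>Two cops\<close>

lemma wheel_cleared_vertex_exposed:
  assumes "n \<ge> 4" "K \<subseteq> {0..<n}" "K \<noteq> {}" "card K + 3 \<le> n"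
    and cops: "c1 < n" "c2 < n" "c1 \<noteq> c2" "c1 \<notin> K" "c2 \<notin> K"
    and hub: "0 \<in> insert c1 (insert c2 K)"
  shows "\<exists>x\<in>K. \<exists>z<n. z \<notin> insert c1 (insert c2 K) \<and> step (wheel_E n) z x"
proof (cases "0 \<in> K")
  case True
  have "finite K"
    using assms(2) finite_subset by blast
  then have "card (insert c1 (insert c2 K)) < card {0..<n}"
    using assms(4) cops by simp
  then have "\<not> {0..<n} \<subseteq> insert c1 (insert c2 K)"
    using card_mono \<open>finite K\<close> by (meson finite_insert leD)
  then obtain z where "z \<in> {0..<n}" "z \<notin> insert c1 (insert c2 K)"
    by blast
  with True wheel_step_hub[of z n] show ?thesis
    by auto
next
  case False
  obtain c where c: "{c1, c2} = {0, c}" "c \<noteq> 0" "c < n"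
    using hub False cops by (cases "c1 = 0") auto
  have "K \<subseteq> {1..<n}"
  proof
    fix x assume "x \<in> K"
    with False have "x \<noteq> 0"
      by metis
    with \<open>x \<in> K\<close> assms(2) show "x \<in> {1..<n}"
      by auto
  qed
  moreover have "c \<in> {1..<n} - K"
    using c cops by (auto simp: Suc_le_eq)
  moreover have "insert c K \<noteq> {1..<n}"
  proof
    assume "insert c K = {1..<n}"
    moreover have "card (insert c K) = card K + 1"
      using \<open>c \<in> {1..<n} - K\<close> \<open>K \<subseteq> {1..<n}\<close> finite_subset by fastforce
    ultimately have "card K + 1 = n - 1"
      by simp
    with assms(4) show False
      by linarith
  qed
  ultimately obtain x where x: "x \<in> K"
    and "rim_pred n x \<notin> insert c K \<or> rim_succ n x \<notin> insert c K"
    using rim_exposed_vertex assms(3) by blast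
  then obtain z where "z \<in> {1..<n} - insert c K" "step (wheel_E n) z x"
    using rim_pred_adjacent rim_succ_adjacent \<open>K \<subseteq> {1..<n}\<close> assms(1) by blast
  moreover have "insert c1 (insert c2 K) = {c1, c2} \<union> K"
    by auto
  ultimately show ?thesis
    unfolding c(1) using x by (intro bexI[OF _ x] exI[of _ z]) auto
qed

lemma wheel_card_cleared_after:
  assumes "n \<ge> 4" "K \<subseteq> {0..<n}" "K \<noteq> {}" "card K + 3 \<le> n"
    and cops: "set C' \<subseteq> {0..<n}" "length C' = 2"
  shows "card ({0..<n} - territory_after (wheel_E n) C' ({0..<n} - K)) \<le> card K + 1"
proof -
  define K' where "K' = {0..<n} - territory_after (wheel_E n) C' ({0..<n} - K)"
  define D where "D = K \<union> set C'"
  have "finite K"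
    using assms(2) finite_subset by blast
  have recontaminated: "v \<notin> K'"
    if "v \<notin> set C'" "z < n" "z \<notin> D" "step (wheel_E n) z v" for v z
    using that by (auto simp: K'_def D_def territory_after_def)
  have "K' \<subseteq> D"
    unfolding K'_def D_def by (rule cleared_after_subset)
  have "D = K \<union> (set C' - K)"
    by (auto simp: D_def)
  then have card_D: "card D = card K + card (set C' - K)"
    using \<open>finite K\<close> card_Un_disjoint[of K "set C' - K"] by simp
  have "card (set C') \<le> 2"
    using card_length[of C'] cops(2) by simp
  then have "card (set C' - K) \<le> 2"
    using card_mono[of "set C'" "set C' - K"] by fastforce
  then consider "0 \<notin> D" | "card (set C' - K) \<le> 1" | "0 \<in> D" "card (set C' - K) = 2"
    by linarith
  then show ?thesis
  proof cases
    case 1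
    then have "K' \<subseteq> set C'"
      using recontaminated[of _ 0] wheel_step_hub \<open>K' \<subseteq> D\<close> by (auto simp: K'_def)
    then have "card K' \<le> 2"
      using card_mono[of "set C'" K'] \<open>card (set C') \<le> 2\<close> by fastforce
    moreover have "card K \<ge> 1"
      using \<open>finite K\<close> assms(3) by (simp add: Suc_le_eq card_gt_0_iff)
    ultimately show ?thesis
      unfolding K'_def by linarith
  next
    case 2
    then show ?thesis
      using card_mono[OF _ \<open>K' \<subseteq> D\<close>] card_D \<open>finite K\<close>
      unfolding K'_def D_def by fastforce
  next
    case 3
    have "set C' - K = set C'"
      using card_seteq[of "set C'" "set C' - K"] \<open>card (set C') \<le> 2\<close> 3(2) by simp
    obtain c1 c2 where c12: "set C' = {c1, c2}" "c1 \<noteq> c2"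
      using 3(2) card_2_iff \<open>set C' - K = set C'\<close> by metis
    have "D = insert c1 (insert c2 K)"
      using c12 by (auto simp: D_def)
    moreover have "c1 < n" "c2 < n" "c1 \<notin> K" "c2 \<notin> K"
      using c12 cops(1) \<open>set C' - K = set C'\<close> by auto
    ultimately obtain x z where "x \<in> K" "z < n" "z \<notin> D" "step (wheel_E n) z x"
      using wheel_cleared_vertex_exposed[OF assms(1-4)] c12(2) 3(1) by metis
    then have "K' \<subseteq> D - {x}"
      using recontaminated[of x z] \<open>K' \<subseteq> D\<close> \<open>set C' - K = set C'\<close> by force
    then have "card K' \<le> card D - 1"
      using \<open>x \<in> K\<close> \<open>finite K\<close> card_mono[of "D - {x}" K']
      by (simp add: D_def card_Diff_singleton)
    then show ?thesis
      using card_D 3 unfolding K'_def by linarith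
  qed
qed

lemma wheel_two_cops_no_sweep:
  assumes "n \<ge> 4"
  shows "S \<subseteq> {0..<n} \<Longrightarrow> length C = 2 \<Longrightarrow> set C \<subseteq> {0..<n} - S
    \<Longrightarrow> card ({0..<n} - S) + t + 2 \<le> n \<Longrightarrow> \<not> cops_sweep (wheel_E n) t C S"
proof (induction t arbitrary: C S)
  case 0
  then show ?case
    by auto
next
  case (Suc t)
  have "\<not> cops_sweep (wheel_E n) t C' (territory_after (wheel_E n) C' S)"
    if moves: "list_all2 (step (wheel_E n)) C C'" for C'
  proof (rule Suc.IH)
    have "set C' \<subseteq> {0..<n}"
      using list_all2_set_rightD[OF moves] Suc.prems(3) wheel_step_closed by fastforce
    then show "territory_after (wheel_E n) C' S \<subseteq> {0..<n}"
      "set C' \<subseteq> {0..<n} - territory_after (wheel_E n) C' S"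
      using territory_after_subset[of "{0..<n}" "wheel_E n" S C'] wheel_step_closed Suc.prems(1)
      by (auto simp: territory_after_def)
    show "length C' = 2"
      using moves Suc.prems(2) by (simp add: list_all2_lengthD[symmetric])
    have "S = {0..<n} - ({0..<n} - S)" "{0..<n} - S \<noteq> {}"
      using Suc.prems by (auto simp: length_Suc_conv numeral_2_eq_2)
    then show "card ({0..<n} - territory_after (wheel_E n) C' S) + t + 2 \<le> n"
      using wheel_card_cleared_after[OF assms, of "{0..<n} - S" C'] Suc.prems(4)
        \<open>length C' = 2\<close> \<open>set C' \<subseteq> {0..<n}\<close> by fastforce
  qed
  moreover have "S \<noteq> {}"
    using Suc.prems(4) by auto
  ultimately show ?case
    unfolding cops_sweep.simps(2) by blast
qed

lemma wheel_not_capt_within_two: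
  assumes "n \<ge> 4" "t + 4 \<le> n" "n ^ Suc t \<le> m"
  shows "\<not> capt_within (wheel_V n) (wheel_E n) 2 m t"
  unfolding wheel_V_def
proof (rule not_capt_within_if_not_cops_sweep)
  fix C :: "nat list" assume C: "length C = 2" "set C \<subseteq> {0..<n}"
  have "card ({0..<n} - ({0..<n} - set C)) = card (set C)"
    using C(2) by (simp add: Diff_Diff_Int inf.absorb2)
  also have "\<dots> \<le> 2"
    using card_length[of C] C(1) by simp
  finally have "card ({0..<n} - ({0..<n} - set C)) \<le> 2" .
  then show "\<not> cops_sweep (wheel_E n) t C ({0..<n} - set C)"
    using C assms(2) by (intro wheel_two_cops_no_sweep[OF assms(1)]) auto
qed (use assms wheel_step_closed in auto)

lemma wheel_territory_arc:
  assumes "k + 4 \<le> n" "S - set C' \<subseteq> {3..k + 2}"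
  shows "territory_after (wheel_E n) C' S \<subseteq> insert 0 {2..k + 3} - set C'"
proof
  fix w assume "w \<in> territory_after (wheel_E n) C' S"
  then obtain x where "x \<in> {3..k + 2}" "step (wheel_E n) x w" "w \<notin> set C'"
    using assms(2) unfolding territory_after_def by blast
  with wheel_step_interior[of n x w] assms(1) show "w \<in> insert 0 {2..k + 3} - set C'"
    by auto
qed

text \<open>The cop on \<open>k + 3\<close> walks down the rim; the other one alternates between the hub and
  vertex \<open>2\<close>.\<close>

lemma wheel_two_cops_sweep_arc:
  assumes "1 \<le> k" "k + 4 \<le> n"
  shows "cops_sweep (wheel_E n) k [k + 3, 0] {2..k + 2}
    \<and> cops_sweep (wheel_E n) k [k + 3, 2] (insert 0 {3..k + 2})"
  using assms
proof (induction k rule: nat_induct_at_least)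
  case base
  have "list_all2 (step (wheel_E n)) [4, 0] [3, 2]" "list_all2 (step (wheel_E n)) [4, 2] [3, 0]"
    using base wheel_step_rim_next[of 3 n] wheel_step_hub[of 2 n] by auto
  moreover have "territory_after (wheel_E n) [3, 2] {2..3} = {}"
    by (rule territory_after_eq_empty) auto
  moreover have "territory_after (wheel_E n) [3, 0] (insert 0 {3..3}) = {}"
    by (rule territory_after_eq_empty) auto
  ultimately have "cops_sweep (wheel_E n) 1 [4, 0] {2..3}"
    "cops_sweep (wheel_E n) 1 [4, 2] (insert 0 {3..3})"
    unfolding One_nat_def cops_sweep.simps by blast+
  moreover have "(1 :: nat) + 3 = 4" "(1 :: nat) + 2 = 3"
    by simp_all
  ultimately show ?case
    by (simp only:)
next
  case (Suc k)
  then have "k + 4 \<le> n"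
    by simp
  note IH = Suc.IH[OF this, THEN conjunct1] Suc.IH[OF this, THEN conjunct2]
  have "{2..k + 3} - set [k + 3, 2] \<subseteq> {3..k + 2}"
    "insert 0 {3..k + 3} - set [k + 3, 0] \<subseteq> {3..k + 2}"
    by auto
  note arc = this[THEN wheel_territory_arc[OF \<open>k + 4 \<le> n\<close>]]
  have "insert 0 {2..k + 3} - set [k + 3, 2] = insert 0 {3..k + 2}"
    "insert 0 {2..k + 3} - set [k + 3, 0] = {2..k + 2}"
    by auto
  with arc IH have "cops_sweep (wheel_E n) k [k + 3, 2]
      (territory_after (wheel_E n) [k + 3, 2] {2..k + 3})"
    "cops_sweep (wheel_E n) k [k + 3, 0]
      (territory_after (wheel_E n) [k + 3, 0] (insert 0 {3..k + 3}))"
    by (metis cops_sweep_antimono)+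
  moreover have "list_all2 (step (wheel_E n)) [k + 4, 0] [k + 3, 2]"
    "list_all2 (step (wheel_E n)) [k + 4, 2] [k + 3, 0]"
    using Suc.prems wheel_step_rim_next[of "k + 3" n] wheel_step_hub[of 2 n]
    by (simp_all add: ac_simps)
  moreover have "Suc k + 3 = k + 4" "Suc k + 2 = k + 3"
    by simp_all
  ultimately show ?case
    unfolding cops_sweep.simps(2) by metis
qed

lemma wheel_two_cops_sweep:
  assumes "n \<ge> 4"
  shows "cops_sweep (wheel_E n) (n - 3) [0, 1] ({0..<n} - {0, 1})"
proof -
  have moves: "list_all2 (step (wheel_E n)) [0, 1] [n - 1, 2]"
    using assms wheel_step_hub[of "n - 1" n] wheel_step_rim_next[of 1 n]
    by (auto simp: numeral_2_eq_2)
  have survivors: "{0..<n} - {0, 1} - set [n - 1, 2] = {3..n - 2}"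
    using assms by auto
  have "cops_sweep (wheel_E n) (n - 4) [n - 1, 2]
      (territory_after (wheel_E n) [n - 1, 2] ({0..<n} - {0, 1}))"
  proof (cases "n = 4")
    case True
    then have "{0..<n} - {0, 1} \<subseteq> set [n - 1, 2]"
      using survivors by auto
    then show ?thesis
      by (simp add: territory_after_eq_empty)
  next
    case False
    then have "1 \<le> n - 4" "n - 4 + 4 \<le> n" and shift: "n - 4 + 2 = n - 2" "n - 4 + 3 = n - 1"
      using assms by auto
    then have "cops_sweep (wheel_E n) (n - 4) [n - 1, 2] (insert 0 {3..n - 2})"
      using conjunct2[OF wheel_two_cops_sweep_arc] by metis
    moreover have "territory_after (wheel_E n) [n - 1, 2] ({0..<n} - {0, 1})
        \<subseteq> insert 0 {2..n - 1} - {n - 1, 2}"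
      using wheel_territory_arc[of "n - 4" n "{0..<n} - {0, 1}" "[n - 1, 2]"] survivors shift
      by simp
    moreover have "insert 0 {2..n - 1} - {n - 1, 2} = insert 0 {3..n - 2}"
      using assms by auto
    ultimately show ?thesis
      using cops_sweep_antimono by metis
  qed
  moreover have "n - 3 = Suc (n - 4)"
    using assms by simp
  ultimately show ?thesis
    using moves by (metis cops_sweep.simps(2))
qed

lemma wheel_capt_within_two:
  assumes "n \<ge> 4"
  shows "capt_within (wheel_V n) (wheel_E n) 2 m (n - 3)"
  unfolding capt_within_def wheel_V_def
proof (intro exI[of _ "[0, 1]"] conjI allI impI)
  fix R assume "length R = m \<and> set R \<subseteq> {0..<n}"
  then have "set (alive [0, 1] R) \<subseteq> {0..<n} - {0, 1}"
    by (auto simp: alive_def)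
  with wheel_two_cops_sweep[OF assms]
  show "cops_force (wheel_E n) (n - 3) [0, 1] (alive [0, 1] R)"
    by (rule cops_force_if_cops_sweep)
qed (use assms in auto)

lemma wheel_capt_two:
  assumes "n \<ge> 4" "n ^ (n - 3) \<le> m"
  shows "capt (wheel_V n) (wheel_E n) 2 m = n - 3"
proof (rule capt_eqI[OF wheel_capt_within_two[OF assms(1)]])
  fix t assume "t < n - 3"
  then have "n ^ Suc t \<le> m"
    using assms power_increasing[of "Suc t" "n - 3" n] by simp
  with \<open>t < n - 3\<close> assms(1) show "\<not> capt_within (wheel_V n) (wheel_E n) 2 m t"
    by (intro wheel_not_capt_within_two) auto
qed

theorem mainTheorem16:
  fixes n :: nat
  assumes "n \<ge> 4"
  shows "\<not> strong_cop_win (wheel_V n) (wheel_E n) 1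
       \<and> strong_cop_win (wheel_V n) (wheel_E n) 2
       \<and> (\<lambda>m. real (capt (wheel_V n) (wheel_E n) 2 m)) \<longlonglongrightarrow> real n - 3"
proof -
  have "\<forall>\<^sub>F m in sequentially. real (capt (wheel_V n) (wheel_E n) 2 m) = real n - 3"
    using wheel_capt_two[OF assms] assms
    by (auto simp: eventually_sequentially of_nat_diff intro!: exI[of _ "n ^ (n - 3)"])
  then have "(\<lambda>m. real (capt (wheel_V n) (wheel_E n) 2 m)) \<longlonglongrightarrow> real n - 3"
    by (rule tendsto_eventually)
  moreover have "cop_win (wheel_V n) (wheel_E n) 2"
    unfolding cop_win_def using wheel_capt_within_two[OF assms] by blast
  moreover have "\<not> (\<exists>L. (\<lambda>m. real (capt (wheel_V n) (wheel_E n) 1 m)) \<longlonglongrightarrow> L)"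
    using not_convergent_if_unbounded wheel_capt_one_unbounded[OF assms] by blast
  ultimately show ?thesis
    unfolding strong_cop_win_def by blast
qed

end
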